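(* (1) For any $l,m\in\mathbb Z^3$, $$|\beta(l,m)|\lesssim R^{3+\gamma}\langle l+m\rangle^{-1}\langle l-m\rangle^{-1}\big\langle|l+m|-|l-m|\big\rangle^{-1}.$$ (2) For any $0\le\delta<1$ and $m\in\mathbb Z^3$, $\sum_{l\in\mathbb Z^3}|l|^\delta|\beta(l,m)|^2\lesssim R^{2(3+\gamma)}\langle m\rangle^{-2+\delta}$; and for any $0\le\delta<1$ and $l\in\mathbb Z^3$, $\sum_{m\in\mathbb Z^3}|m|^\delta|\beta(l,m)|^2\lesssim R^{2(3+\gamma)}\langle l\rangle^{-2+\delta}$.
   Context: $0\le\gamma\le1$, $R>0$, $L=\frac{3+\sqrt2}{2}R$, $\lambda=R/L=\frac{2}{3+\sqrt2}$, $\langle x\rangle=\sqrt{1+|x|^2}$, $\operatorname{sinc}(x)=\sin x/x$ with $\operatorname{sinc}(0)=1$, and $$\beta(l,m)=(2R)^{3+\gamma}(4\pi)^2\int_0^1r^{2+\gamma}\operatorname{sinc}(\pi\lambda r|l-m|)\operatorname{sinc}(\pi\lambda r|l+m|)\,dr.$$ Implicit constants are independent of $R,l,m$. *)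

theory Defs
  imports "HOL-Analysis.Analysis"
begin

definition rvec :: "int ^ 3 \<Rightarrow> real ^ 3" where
  "rvec l = (\<chi> i. real_of_int (l $ i))"

definition vlen :: "int ^ 3 \<Rightarrow> real" where
  "vlen l = norm (rvec l)"

definition jbr :: "real \<Rightarrow> real" where
  "jbr x = sqrt (1 + x\<^sup>2)"

definition sinc :: "real \<Rightarrow> real" where
  "sinc x = (if x = 0 then 1 else sin x / x)"

definition lam :: real where
  "lam = 2 / (3 + sqrt 2)"

definition beta :: "real \<Rightarrow> real \<Rightarrow> int ^ 3 \<Rightarrow> int ^ 3 \<Rightarrow> real" where
  "beta \<gamma> R l m = (2 * R) powr (3 + \<gamma>) * (4 * pi)\<^sup>2 *
     integral {0..1} (\<lambda>r. r powr (2 + \<gamma>) * sinc (pi * lam * r * vlen (l - m))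
                                           * sinc (pi * lam * r * vlen (l + m)))"

text \<open>Real power x^d for x \<ge> 0 with the convention 0^0 = 1.\<close>
definition rpow :: "real \<Rightarrow> real \<Rightarrow> real" where
  "rpow x d = (if x = 0 then (if d = 0 then 1 else 0) else x powr d)"

end

theory Submission
  imports Defs
begin

text \<open>
  Part (1). \<beta>(l,m) is (2R)^(3+\<gamma>) (4\<pi>)^2 times the radial integral of
  r^(2+\<gamma>) sinc(ar) sinc(br) over [0,1], with frequencies a = \<pi>\<lambda>|l-m| and b = \<pi>\<lambda>|l+m|,
  each of which is 0 or at least 1.  Writing sin(ar) sin(br) as a difference of cosines and
  integrating by parts, the integral of r^p cos(cr) over [0,1] is O(1/\<langle>c\<rangle>), which gives the
  decay 1/(\<langle>a\<rangle>\<langle>b\<rangle>\<langle>a-b\<rangle>).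

  Part (2). By the symmetry of \<beta> it suffices to sum over l the weight
  |l|^\<delta> / (\<langle>U\<rangle>^2\<langle>V\<rangle>^2\<langle>U-V\<rangle>^2) with U = |l+m|, V = |l-m|.  The identity
  (U+V)|U-V| = 4|l\<cdot>m| turns the last factor into a Lorentzian in l\<cdot>m, so the weight is dominated
  by Lorentzian profiles in l\<cdot>m (and, near l = \<plusminus>m, in one coordinate of l \<mp> m).  If
  |m_j| \<ge> |m|/2, then along lattice lines in direction j the product l\<cdot>m is affine with slope
  m_j; there the Lorentzian sums telescope through arctan, and the remaining sum over the two
  transverse coordinates converges because \<delta> < 1.
\<close>

section \<open>Japanese bracket\<close>

lemma jbr_ge_1: "1 \<le> jbr x"
  unfolding jbr_def by simp

lemma jbr_pos: "0 < jbr x"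
  using jbr_ge_1[of x] by linarith

lemma jbr_0 [simp]: "jbr 0 = 1"
  unfolding jbr_def by simp

lemma jbr_minus: "jbr (- x) = jbr x"
  unfolding jbr_def by simp

lemma jbr_squared: "(jbr x)\<^sup>2 = 1 + x\<^sup>2"
  unfolding jbr_def by simp

lemma abs_le_jbr: "\<bar>x\<bar> \<le> jbr x"
  unfolding jbr_def by (rule real_le_rsqrt) simp

lemma jbr_mono: "\<bar>x\<bar> \<le> \<bar>y\<bar> \<Longrightarrow> jbr x \<le> jbr y"
  unfolding jbr_def by (simp add: abs_le_square_iff)

lemma jbr_le_jbr_mult: "1 \<le> k \<Longrightarrow> jbr x \<le> jbr (k * x)"
  by (rule jbr_mono) (simp add: abs_mult mult_le_cancel_right1)

lemma jbr_le_sqrt2_abs: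
  assumes "1 \<le> \<bar>x\<bar>"
  shows "jbr x \<le> sqrt 2 * \<bar>x\<bar>"
proof -
  have "1 + x\<^sup>2 \<le> 2 * x\<^sup>2"
    using assms abs_le_square_iff[of 1 x] by simp
  then show ?thesis
    unfolding jbr_def by (metis abs_ge_zero real_sqrt_abs real_sqrt_le_mono real_sqrt_mult)
qed

lemma jbr_mult_le:
  assumes "1 \<le> \<bar>x\<bar>" "1 \<le> \<bar>y\<bar>"
  shows "jbr x * jbr y \<le> 2 * \<bar>x\<bar> * \<bar>y\<bar>"
proof -
  have "jbr x * jbr y \<le> (sqrt 2 * \<bar>x\<bar>) * (sqrt 2 * \<bar>y\<bar>)"
    using assms by (intro mult_mono jbr_le_sqrt2_abs) (auto simp: less_imp_le[OF jbr_pos])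
  also have "\<dots> = (sqrt 2 * sqrt 2) * \<bar>x\<bar> * \<bar>y\<bar>" by (simp only: ac_simps)
  finally show ?thesis by simp
qed

section \<open>Oscillatory radial integrals\<close>

lemma integrable_powr_mult_continuous:
  fixes k :: "real \<Rightarrow> real"
  assumes "0 \<le> p" "0 \<le> a" and k: "continuous_on {a..b} k"
  shows "(\<lambda>r. r powr p * k r) integrable_on {a..b}"
proof (cases "p = 0")
  case True
  show ?thesis
    by (rule integrable_spike_finite[where S = "{0}", OF _ _ integrable_continuous_interval[OF k]])
      (auto simp: True)
next
  case False
  have "continuous_on {a..b} (\<lambda>r. r powr p * k r)"
    using assms False by (intro continuous_intros continuous_on_powr') auto
  then show ?thesis by (rule integrable_continuous_interval)
qed

lemma abs_integral_powr_mult_le: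
  fixes g :: "real \<Rightarrow> real"
  assumes p: "0 \<le> p" and t: "0 \<le> t" "t \<le> 1"
    and g: "continuous_on {0..t} g" and g1: "\<And>r. \<bar>g r\<bar> \<le> 1"
  shows "\<bar>integral {0..t} (\<lambda>r. r powr p * g r)\<bar> \<le> t"
proof -
  have "norm (integral {0..t} (\<lambda>r. r powr p * g r)) \<le> integral {0..t} (\<lambda>_. 1::real)"
  proof (rule integral_norm_bound_integral)
    show "(\<lambda>r. r powr p * g r) integrable_on {0..t}"
      by (rule integrable_powr_mult_continuous[OF p _ g]) simp
    fix r assume r: "r \<in> {0..t}"
    have "r powr p \<le> 1" using r t p by (auto intro!: powr_le1)
    then show "norm (r powr p * g r) \<le> 1"
      using g1[of r] by (simp add: abs_mult mult_le_one)
  qed (rule integrable_const_ivl)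
  then show ?thesis using t by simp
qed

lemma abs_integral_deriv_powr_mult_sin_le:
  fixes p t c \<phi> :: real
  assumes p: "0 \<le> p" and t: "0 < t" "t \<le> 1"
  shows "\<bar>integral {t..1} (\<lambda>r. p * r powr (p - 1) * sin (c * r + \<phi>))\<bar> \<le> 1"
proof -
  have "((\<lambda>r. r powr p) has_real_derivative p * r powr (p - 1)) (at r within {t..1})"
    if "r \<in> {t..1}" for r
    using that t by (auto intro!: derivative_eq_intros)
  then have "((\<lambda>r. p * r powr (p - 1)) has_integral 1 powr p - t powr p) {t..1}"
    using t by (intro fundamental_theorem_of_calculus[of t 1 "\<lambda>r. r powr p"])
      (auto simp: has_real_derivative_iff_has_vector_derivative[symmetric])
  then have FTC: "((\<lambda>r. p * r powr (p - 1)) has_integral 1 - t powr p) {t..1}" by simp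
  have "norm (integral {t..1} (\<lambda>r. p * r powr (p - 1) * sin (c * r + \<phi>)))
      \<le> integral {t..1} (\<lambda>r. p * r powr (p - 1))"
  proof (rule integral_norm_bound_integral)
    show "(\<lambda>r. p * r powr (p - 1) * sin (c * r + \<phi>)) integrable_on {t..1}"
      using t by (intro integrable_continuous_interval continuous_intros) auto
    show "(\<lambda>r. p * r powr (p - 1)) integrable_on {t..1}" using FTC by blast
    fix r
    show "norm (p * r powr (p - 1) * sin (c * r + \<phi>)) \<le> p * r powr (p - 1)"
      using p by (simp add: abs_mult mult_left_le)
  qed
  also have "\<dots> = 1 - t powr p" using FTC by (rule integral_unique)
  also have "\<dots> \<le> 1" by simp
  finally show ?thesis by simp
qed

lemma abs_integral_powr_cos_tail_le:
  fixes p t c \<phi> :: real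
  assumes p: "0 \<le> p" and t: "0 < t" "t \<le> 1" and c: "0 < c"
  shows "\<bar>integral {t..1} (\<lambda>r. r powr p * cos (c * r + \<phi>))\<bar> \<le> 3 / c"
proof -
  define f where "f r = r powr p * cos (c * r + \<phi>)" for r
  define g where "g r = p * r powr (p - 1) * sin (c * r + \<phi>)" for r
  define H where "H r = r powr p * sin (c * r + \<phi>) / c" for r
  have "(H has_real_derivative g r / c + f r) (at r within {t..1})" if "r \<in> {t..1}" for r
    using that t c unfolding H_def g_def f_def
    by (auto intro!: derivative_eq_intros simp: field_simps)
  then have "((\<lambda>r. g r / c + f r) has_integral H 1 - H t) {t..1}"
    using t by (auto intro!: fundamental_theorem_of_calculus
        simp: has_real_derivative_iff_has_vector_derivative[symmetric])
  then have "integral {t..1} (\<lambda>r. g r / c + f r) = H 1 - H t" by (rule integral_unique)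
  moreover have "g integrable_on {t..1}" "f integrable_on {t..1}"
    unfolding g_def f_def using t
    by (auto intro!: integrable_continuous_interval integrable_powr_mult_continuous p continuous_intros)
  ultimately have f_eq: "integral {t..1} f = (H 1 - H t) - integral {t..1} g / c"
    using integral_add[OF integrable_on_divide[of g] \<open>f integrable_on {t..1}\<close>] by simp
  have H_bound: "\<bar>H r\<bar> \<le> 1 / c" if "0 < r" "r \<le> 1" for r
  proof -
    have "r powr p \<le> 1" using that p by (auto intro!: powr_le1)
    then have "\<bar>r powr p * sin (c * r + \<phi>)\<bar> \<le> 1"
      by (simp add: abs_mult mult_le_one)
    then show ?thesis unfolding H_def using c by (simp add: abs_div divide_right_mono)
  qed
  have "\<bar>integral {t..1} g / c\<bar> \<le> 1 / c"
    using abs_integral_deriv_powr_mult_sin_le[OF p t] c unfolding g_def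
    by (simp add: abs_div divide_right_mono)
  then show ?thesis
    using f_eq H_bound[of 1] H_bound[of t] t unfolding f_def by linarith
qed

lemma abs_integral_powr_cos_le:
  fixes p c \<phi> :: real
  assumes p: "0 \<le> p" and c: "1 \<le> c"
  shows "\<bar>integral {0..1} (\<lambda>r. r powr p * cos (c * r + \<phi>))\<bar> \<le> 4 / c"
proof -
  define f where "f r = r powr p * cos (c * r + \<phi>)" for r
  have t: "0 < 1 / c" "1 / c \<le> 1" using c by auto
  have "f integrable_on {0..1}"
    unfolding f_def by (intro integrable_powr_mult_continuous p continuous_intros) auto
  then have "integral {0..1} f = integral {0..1/c} f + integral {1/c..1} f"
    using Henstock_Kurzweil_Integration.integral_combine[of 0 "1/c" 1 f] t by simp
  moreover have "\<bar>integral {0..1/c} f\<bar> \<le> 1 / c"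
    unfolding f_def using t by (intro abs_integral_powr_mult_le p continuous_intros) auto
  moreover have "\<bar>integral {1/c..1} f\<bar> \<le> 3 / c"
    unfolding f_def using t c by (intro abs_integral_powr_cos_tail_le p) auto
  ultimately show ?thesis unfolding f_def by linarith
qed

lemma abs_integral_powr_cos_le_jbr:
  fixes p c :: real
  assumes p: "0 \<le> p"
  shows "\<bar>integral {0..1} (\<lambda>r. r powr p * cos (c * r))\<bar> \<le> 6 / jbr c"
proof (cases "1 \<le> \<bar>c\<bar>")
  case True
  have "integral {0..1} (\<lambda>r. r powr p * cos (c * r))
      = integral {0..1} (\<lambda>r. r powr p * cos (\<bar>c\<bar> * r + 0))"
    by (rule integral_cong) (simp add: abs_if)
  also have "\<bar>\<dots>\<bar> \<le> 4 / \<bar>c\<bar>" by (rule abs_integral_powr_cos_le[OF p True])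
  also have "\<dots> \<le> 4 * sqrt 2 / jbr c"
    using jbr_le_sqrt2_abs[OF True] True jbr_pos[of c] by (simp add: field_simps)
  also have "\<dots> \<le> 6 / jbr c"
  proof -
    have "sqrt 2 \<le> 3 / 2" by (rule real_le_lsqrt) (auto simp: power2_eq_square)
    then show ?thesis using jbr_pos[of c] by (simp add: divide_right_mono)
  qed
  finally show ?thesis .
next
  case False
  have "\<bar>integral {0..1} (\<lambda>r. r powr p * cos (c * r))\<bar> \<le> 1"
    by (intro abs_integral_powr_mult_le[OF p, of 1, simplified] continuous_intros) auto
  also have "1 \<le> 6 / jbr c"
  proof -
    have "jbr c \<le> jbr 1" using False by (intro jbr_mono) simp
    also have "\<dots> \<le> 6" unfolding jbr_def by (rule real_le_lsqrt) auto
    finally show ?thesis using jbr_pos[of c] by simp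
  qed
  finally show ?thesis .
qed

lemma abs_integral_powr_sinc_le:
  fixes p b :: real
  assumes p: "2 \<le> p" and b: "1 \<le> b"
  shows "\<bar>integral {0..1} (\<lambda>r. r powr p * sinc (b * r))\<bar> \<le> 8 / (jbr b)\<^sup>2"
proof -
  have "r powr p * sinc (b * r) = (r powr (p - 1) * cos (b * r + - (pi / 2))) / b"
    if "r \<in> {0..1}" for r
  proof (cases "r = 0")
    case False
    then have "r powr p = r powr (p - 1) * r" using that by (simp add: powr_diff)
    moreover have "cos (b * r + - (pi / 2)) = sin (b * r)" by (simp add: cos_diff)
    ultimately show ?thesis using False b by (simp add: sinc_def)
  qed (use p in simp)
  then have "integral {0..1} (\<lambda>r. r powr p * sinc (b * r))
      = integral {0..1} (\<lambda>r. r powr (p - 1) * cos (b * r + - (pi / 2)) / b)"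
    by (intro integral_cong)
  also have "\<dots> = integral {0..1} (\<lambda>r. r powr (p - 1) * cos (b * r + - (pi / 2))) / b"
    by simp
  also have "\<bar>\<dots>\<bar> \<le> (4 / b) / b"
    using divide_right_mono[OF abs_integral_powr_cos_le[of "p - 1" b "- (pi / 2)"], of b] p b
    by (simp add: abs_div)
  also have "\<dots> \<le> 8 / (jbr b)\<^sup>2"
    using jbr_mult_le[of b b] b jbr_pos[of b] by (simp add: field_simps power2_eq_square)
  finally show ?thesis .
qed

lemma sinc_mult_sinc_eq:
  fixes a b r :: real
  assumes "a \<noteq> 0" "b \<noteq> 0" "r \<noteq> 0"
  shows "r\<^sup>2 * sinc (a * r) * sinc (b * r) = (cos ((a - b) * r) - cos ((a + b) * r)) / (2 * a * b)"
proof -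
  have "cos ((a - b) * r) - cos ((a + b) * r) = 2 * (sin (a * r) * sin (b * r))"
    by (simp add: sin_times_sin algebra_simps)
  then show ?thesis using assms by (simp add: sinc_def power2_eq_square)
qed

lemma abs_integral_powr_sinc_sinc_le:
  fixes p a b :: real
  assumes p: "2 \<le> p" and a: "1 \<le> a" and b: "1 \<le> b"
  shows "\<bar>integral {0..1} (\<lambda>r. r powr p * sinc (a * r) * sinc (b * r))\<bar>
           \<le> 12 / (jbr a * jbr b * jbr (b - a))"
proof -
  define J where "J c = integral {0..1} (\<lambda>r. r powr (p - 2) * cos (c * r))" for c
  have "r powr p * sinc (a * r) * sinc (b * r)
      = (r powr (p - 2) * cos ((a - b) * r) - r powr (p - 2) * cos ((a + b) * r)) / (2 * a * b)"
    if "r \<in> {0..1}" for r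
  proof (cases "r = 0")
    case False
    then have "r powr p = r powr (p - 2) * r\<^sup>2"
      using that by (simp add: powr_diff powr_realpow)
    then have "r powr p * sinc (a * r) * sinc (b * r) = r powr (p - 2) * (r\<^sup>2 * sinc (a * r) * sinc (b * r))"
      by (simp add: mult.assoc)
    then show ?thesis
      using sinc_mult_sinc_eq[of a b r] False a b by (simp add: right_diff_distrib)
  qed (use p in simp)
  moreover have int: "(\<lambda>r. r powr (p - 2) * cos (c * r)) integrable_on {0..1}" for c
    using p by (intro integrable_powr_mult_continuous continuous_intros) auto
  ultimately have "integral {0..1} (\<lambda>r. r powr p * sinc (a * r) * sinc (b * r))
      = integral {0..1} (\<lambda>r. (r powr (p - 2) * cos ((a - b) * r) - r powr (p - 2) * cos ((a + b) * r))
          / (2 * a * b))"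
    by (intro integral_cong)
  also have "\<dots> = (J (a - b) - J (a + b)) / (2 * a * b)"
    unfolding J_def by (simp add: integral_diff[OF int int])
  finally have I: "integral {0..1} (\<lambda>r. r powr p * sinc (a * r) * sinc (b * r))
      = (J (a - b) - J (a + b)) / (2 * a * b)" .
  have "\<bar>J (a - b)\<bar> \<le> 6 / jbr (a - b)" "\<bar>J (a + b)\<bar> \<le> 6 / jbr (a + b)"
    unfolding J_def using p by (intro abs_integral_powr_cos_le_jbr; simp)+
  moreover have "6 / jbr (a + b) \<le> 6 / jbr (a - b)"
    using a b jbr_mono[of "a - b" "a + b"] jbr_pos[of "a - b"] by (simp add: frac_le)
  ultimately have "\<bar>J (a - b) - J (a + b)\<bar> \<le> 12 / jbr (a - b)"
    by linarith
  then have "\<bar>J (a - b) - J (a + b)\<bar> / (2 * a * b) \<le> 12 / jbr (a - b) / (2 * a * b)"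
    using a b by (intro divide_right_mono) auto
  also have "\<dots> = 12 / (2 * a * b * jbr (b - a))"
    using jbr_minus[of "b - a"] by simp
  also have "\<dots> \<le> 12 / (jbr a * jbr b * jbr (b - a))"
    using jbr_mult_le[of a b] a b jbr_pos[of a] jbr_pos[of b] jbr_pos[of "b - a"]
    by (intro divide_left_mono mult_right_mono mult_pos_pos) auto
  finally show ?thesis using I a b by (simp add: abs_div)
qed

lemma sinc_0 [simp]: "sinc 0 = 1"
  unfolding sinc_def by simp

lemma abs_integral_powr_sinc_sinc_le_jbr:
  fixes p a b :: real
  assumes p: "2 \<le> p" and a: "a = 0 \<or> 1 \<le> a" and b: "b = 0 \<or> 1 \<le> b"
  shows "\<bar>integral {0..1} (\<lambda>r. r powr p * sinc (a * r) * sinc (b * r))\<bar>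
           \<le> 12 / (jbr a * jbr b * jbr (b - a))"
proof -
  consider "a = 0" "b = 0" | "a = 0" "1 \<le> b" | "1 \<le> a" "b = 0" | "1 \<le> a" "1 \<le> b"
    using a b by blast
  then show ?thesis
  proof cases
    case 1
    then show ?thesis using abs_integral_powr_mult_le[of p 1 "\<lambda>_. 1"] p by simp
  next
    case 2
    then show ?thesis
      using abs_integral_powr_sinc_le[OF p 2(2)] divide_right_mono[of 8 12 "(jbr b)\<^sup>2"]
      by (simp add: power2_eq_square)
  next
    case 3
    then show ?thesis
      using abs_integral_powr_sinc_le[OF p 3(1)] divide_right_mono[of 8 12 "(jbr a)\<^sup>2"]
      by (simp add: power2_eq_square jbr_minus)
  next
    case 4
    then show ?thesis using abs_integral_powr_sinc_sinc_le[OF p] by blast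
  qed
qed

section \<open>Lattice geometry\<close>

lemma rvec_add [simp]: "rvec (l + m) = rvec l + rvec m"
  unfolding rvec_def by (simp add: vec_eq_iff)

lemma rvec_diff [simp]: "rvec (l - m) = rvec l - rvec m"
  unfolding rvec_def by (simp add: vec_eq_iff)

lemma rvec_uminus [simp]: "rvec (- l) = - rvec l"
  unfolding rvec_def by (simp add: vec_eq_iff)

lemma vlen_nonneg: "0 \<le> vlen l"
  unfolding vlen_def by simp

lemma vlen_eq_0_iff: "vlen l = 0 \<longleftrightarrow> l = 0"
  unfolding vlen_def rvec_def by (simp add: vec_eq_iff)

lemma vlen_uminus: "vlen (- l) = vlen l"
  unfolding vlen_def by simp

lemma vlen_diff_commute: "vlen (m - l) = vlen (l - m)"
  unfolding vlen_def by (simp add: norm_minus_commute)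

lemma vlen_squared: "(vlen l)\<^sup>2 = (\<Sum>i\<in>UNIV. (real_of_int (l $ i))\<^sup>2)"
  unfolding vlen_def power2_norm_eq_inner rvec_def inner_vec_def by (simp add: power2_eq_square)

lemma vlen_eq_0_or_ge_1: "vlen l = 0 \<or> 1 \<le> vlen l"
proof -
  define S where "S = (\<Sum>i\<in>UNIV. (l $ i)\<^sup>2)"
  have sq: "(vlen l)\<^sup>2 = real_of_int S"
    unfolding S_def vlen_squared by simp
  have "0 \<le> S" unfolding S_def by (simp add: sum_nonneg)
  then consider "S = 0" | "1 \<le> S" by linarith
  then show ?thesis
  proof cases
    case 1
    then show ?thesis using sq by simp
  next
    case 2
    then have "1 \<le> (vlen l)\<^sup>2" using sq by simp
    then show ?thesis using vlen_nonneg[of l] abs_le_square_iff[of 1 "vlen l"] by simp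
  qed
qed

lemma abs_component_le_vlen: "\<bar>real_of_int (l $ i)\<bar> \<le> vlen l"
  using component_le_norm_cart[of "rvec l" i] unfolding vlen_def rvec_def by simp

lemma vlen_add_squared_diff:
  "(vlen (l + m))\<^sup>2 - (vlen (l - m))\<^sup>2 = 4 * (rvec l \<bullet> rvec m)"
  unfolding vlen_def by (simp add: power2_norm_eq_inner algebra_simps inner_commute)

lemma abs_inner_eq_vlen_add_diff:
  "4 * \<bar>rvec l \<bullet> rvec m\<bar> = (vlen (l + m) + vlen (l - m)) * \<bar>vlen (l + m) - vlen (l - m)\<bar>"
proof -
  have "4 * \<bar>rvec l \<bullet> rvec m\<bar> = \<bar>(vlen (l + m) + vlen (l - m)) * (vlen (l + m) - vlen (l - m))\<bar>"
    using vlen_add_squared_diff[of l m] by (simp add: power2_eq_square algebra_simps)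
  then show ?thesis using vlen_nonneg[of "l + m"] vlen_nonneg[of "l - m"] by (simp add: abs_mult)
qed

lemma vlen_add_plus_vlen_diff_ge:
  "2 * vlen l \<le> vlen (l + m) + vlen (l - m)"
  "2 * vlen m \<le> vlen (l + m) + vlen (l - m)"
proof -
  have "norm (2 *\<^sub>R rvec l) \<le> norm (rvec l + rvec m) + norm (rvec l - rvec m)"
    using norm_triangle_ineq[of "rvec l + rvec m" "rvec l - rvec m"] by (simp add: scaleR_2)
  moreover have "norm (2 *\<^sub>R rvec m) \<le> norm (rvec l + rvec m) + norm (rvec l - rvec m)"
    using norm_triangle_ineq4[of "rvec l + rvec m" "rvec l - rvec m"] by (simp add: scaleR_2)
  ultimately show "2 * vlen l \<le> vlen (l + m) + vlen (l - m)"
    "2 * vlen m \<le> vlen (l + m) + vlen (l - m)"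
    unfolding vlen_def by simp_all
qed

lemma vlen_add_plus_vlen_diff_le:
  "vlen (l + m) + vlen (l - m) \<le> 2 * vlen l + 2 * vlen m"
  using norm_triangle_ineq[of "rvec l" "rvec m"] norm_triangle_ineq4[of "rvec l" "rvec m"]
  unfolding vlen_def by simp

lemma vlen_diff_le_vlen_add_diff:
  "vlen l - vlen m \<le> vlen (l + m)" "vlen l - vlen m \<le> vlen (l - m)"
  using norm_diff_ineq[of "rvec l" "rvec m"] norm_triangle_ineq2[of "rvec l" "rvec m"]
  unfolding vlen_def by simp_all

lemma sum_UNIV_3_rotate: "(\<Sum>i\<in>UNIV. f i) = f (j :: 3) + f (j + 1) + f (j + 2)"
proof -
  have wrap: "(4 :: 3) = 1" "(5 :: 3) = 2" by simp_all
  show ?thesis using exhaust_3[of j] by (auto simp: sum_3 ac_simps wrap)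
qed

definition fiber_point :: "3 \<Rightarrow> int \<Rightarrow> int \<Rightarrow> int \<Rightarrow> int ^ 3" where
  "fiber_point j n b c = (\<chi> i. if i = j then n else if i = j + 1 then b else c)"

lemma fiber_point_nth [simp]:
  "fiber_point j n b c $ j = n"
  "fiber_point j n b c $ (j + 1) = b"
  "fiber_point j n b c $ (j + 2) = c"
proof -
  have "j + 1 \<noteq> j" "j + 2 \<noteq> j" "j + 2 \<noteq> j + 1"
    using exhaust_3[of j] by auto
  then show "fiber_point j n b c $ j = n" "fiber_point j n b c $ (j + 1) = b"
    "fiber_point j n b c $ (j + 2) = c"
    unfolding fiber_point_def by auto
qed

lemma fiber_point_eq_iff:
  "fiber_point j n b c = l \<longleftrightarrow> n = l $ j \<and> b = l $ (j + 1) \<and> c = l $ (j + 2)"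
proof
  assume "n = l $ j \<and> b = l $ (j + 1) \<and> c = l $ (j + 2)"
  moreover have "i = j \<or> i = j + 1 \<or> i = j + 2" for i :: 3
    using exhaust_3[of i] exhaust_3[of j] by auto
  ultimately show "fiber_point j n b c = l"
    unfolding vec_eq_iff by (metis fiber_point_nth)
qed auto

lemma inner_fiber_point:
  "rvec (fiber_point j n b c) \<bullet> rvec m
     = of_int n * of_int (m $ j) + (of_int b * of_int (m $ (j + 1)) + of_int c * of_int (m $ (j + 2)))"
  unfolding rvec_def inner_vec_def sum_UNIV_3_rotate[of _ j] by simp

lemma vlen_fiber_point_squared:
  "(vlen (fiber_point j n b c))\<^sup>2 = (of_int n)\<^sup>2 + (of_int b)\<^sup>2 + (of_int c)\<^sup>2"
  unfolding vlen_squared sum_UNIV_3_rotate[of _ j] by simp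

lemma sum_le_by_fibers:
  fixes f :: "int ^ 3 \<Rightarrow> real" and g :: "int \<Rightarrow> int \<Rightarrow> real"
  assumes f_nonneg: "\<And>l. 0 \<le> f l"
    and fibers: "\<And>b c N. finite N \<Longrightarrow> (\<Sum>n\<in>N. f (fiber_point j n b c)) \<le> g b c"
    and planes: "\<And>B C. finite B \<Longrightarrow> finite C \<Longrightarrow> (\<Sum>b\<in>B. \<Sum>c\<in>C. g b c) \<le> K"
    and F: "finite F"
  shows "sum f F \<le> K"
proof -
  define N where "N = (\<lambda>l. l $ j) ` F"
  define B where "B = (\<lambda>l. l $ (j + 1)) ` F"
  define C where "C = (\<lambda>l. l $ (j + 2)) ` F"
  define e where "e = (\<lambda>(b, c, n). fiber_point j n b c)"
  have fin: "finite N" "finite B" "finite C" using F unfolding N_def B_def C_def by auto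
  have "inj e" unfolding e_def inj_def by (auto simp: fiber_point_eq_iff)
  have "F \<subseteq> e ` (B \<times> C \<times> N)"
  proof
    fix l assume "l \<in> F"
    then have "(l $ (j + 1), l $ (j + 2), l $ j) \<in> B \<times> C \<times> N" unfolding N_def B_def C_def by auto
    moreover have "e (l $ (j + 1), l $ (j + 2), l $ j) = l" unfolding e_def by (simp add: fiber_point_eq_iff)
    ultimately show "l \<in> e ` (B \<times> C \<times> N)" by (metis image_eqI)
  qed
  then have "sum f F \<le> sum f (e ` (B \<times> C \<times> N))"
    using fin f_nonneg by (intro sum_mono2) auto
  also have "\<dots> = (\<Sum>x\<in>B \<times> C \<times> N. f (e x))"
    using \<open>inj e\<close> by (simp add: sum.reindex inj_on_subset[of e])
  also have "\<dots> = (\<Sum>b\<in>B. \<Sum>c\<in>C. \<Sum>n\<in>N. f (fiber_point j n b c))"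
    unfolding e_def by (simp add: sum.cartesian_product split_beta)
  also have "\<dots> \<le> (\<Sum>b\<in>B. \<Sum>c\<in>C. g b c)"
    using fin by (intro sum_mono fibers)
  also have "\<dots> \<le> K" using fin by (intro planes)
  finally show ?thesis .
qed

lemma exists_large_component:
  obtains j where "vlen m \<le> 2 * \<bar>real_of_int (m $ j)\<bar>"
proof -
  have "Max (range (\<lambda>i. \<bar>m $ i\<bar>)) \<in> range (\<lambda>i. \<bar>m $ i\<bar>)" by (intro Max_in) auto
  then obtain j where j: "Max (range (\<lambda>i. \<bar>m $ i\<bar>)) = \<bar>m $ j\<bar>" by (rule rangeE)
  have "\<bar>m $ i\<bar> \<le> \<bar>m $ j\<bar>" for i unfolding j[symmetric] by (intro Max_ge) auto
  then have "(real_of_int (m $ i))\<^sup>2 \<le> (real_of_int (m $ j))\<^sup>2" for i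
    by (metis abs_le_square_iff of_int_abs of_int_le_iff)
  then have "(vlen m)\<^sup>2 \<le> (\<Sum>i\<in>(UNIV :: 3 set). (real_of_int (m $ j))\<^sup>2)"
    unfolding vlen_squared by (intro sum_mono)
  also have "\<dots> \<le> (2 * \<bar>real_of_int (m $ j)\<bar>)\<^sup>2"
    by (simp add: power2_eq_square)
  finally have "vlen m \<le> 2 * \<bar>real_of_int (m $ j)\<bar>"
    by (rule power2_le_imp_le) simp
  then show ?thesis by (rule that)
qed

section \<open>One- and two-dimensional lattice sums\<close>

lemma sum_le_telescoping:
  fixes G h :: "int \<Rightarrow> real"
  assumes mono: "\<And>n. G n \<le> G (n + 1)" and lower: "\<And>n. a \<le> G n" and upper: "\<And>n. G n \<le> b"
    and N: "finite N" and h: "\<And>n. n \<in> N \<Longrightarrow> h n \<le> G (n + 1) - G n"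
  shows "sum h N \<le> b - a"
proof -
  have telescope: "(\<Sum>n\<in>{lo..<hi}. G (n + 1) - G n) = G hi - G lo" if "lo \<le> hi" for lo hi
    using that
  proof (induction hi rule: int_ge_induct)
    case (step i)
    then have "{lo..<i + 1} = insert i {lo..<i}" by auto
    then show ?case using step by simp
  qed simp
  obtain k where k: "abs ` N \<subseteq> {..k}" using N finite_int_iff_bounded_le by blast
  then have sub: "N \<subseteq> {- max k 0..<max k 0 + 1}" by force
  have "sum h N \<le> (\<Sum>n\<in>N. G (n + 1) - G n)" by (intro sum_mono h)
  also have "\<dots> \<le> (\<Sum>n\<in>{- max k 0..<max k 0 + 1}. G (n + 1) - G n)"
    using sub mono by (intro sum_mono2) auto
  also have "\<dots> = G (max k 0 + 1) - G (- max k 0)" by (rule telescope) simp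
  also have "\<dots> \<le> b - a" using lower upper by (intro diff_mono)
  finally show ?thesis .
qed

lemma arctan_increment_ge:
  fixes y s :: real
  assumes s: "0 < s" "s \<le> 1"
  shows "s / (3 * (1 + y\<^sup>2)) \<le> arctan (y + s) - arctan y"
proof -
  obtain z where z: "y < z" "z < y + s"
    and eq: "arctan (y + s) - arctan y = (y + s - y) * inverse (1 + z\<^sup>2)"
    using MVT2[of y "y + s" arctan "\<lambda>z. inverse (1 + z\<^sup>2)"] s by (auto intro: DERIV_arctan)
  have "2 * y\<^sup>2 + 2 * (z - y)\<^sup>2 - z\<^sup>2 = (z - 2 * y)\<^sup>2"
    by (simp add: power2_eq_square algebra_simps)
  moreover have "(z - y)\<^sup>2 \<le> 1" using z s by (intro power_le_one) auto
  moreover have "0 \<le> (z - 2 * y)\<^sup>2" "0 \<le> y\<^sup>2" by simp_all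
  ultimately have "1 + z\<^sup>2 \<le> 3 * (1 + y\<^sup>2)" unfolding distrib_left by linarith
  moreover have "0 < 3 * (1 + y\<^sup>2) * (1 + z\<^sup>2)" by (intro mult_pos_pos add_pos_nonneg) auto
  ultimately have "s / (3 * (1 + y\<^sup>2)) \<le> s / (1 + z\<^sup>2)"
    using s by (intro divide_left_mono) auto
  then show ?thesis using eq by (simp add: divide_inverse)
qed

lemma sum_inverse_one_plus_square_le:
  fixes x t :: real
  assumes t: "0 < t" and N: "finite N"
  shows "(\<Sum>n\<in>N. 1 / (1 + (x + of_int n * t)\<^sup>2)) \<le> 3 * pi * (1 + 1 / t)"
proof -
  define s where "s = min t 1"
  have s: "0 < s" "s \<le> 1" "s \<le> t" using t by (auto simp: s_def)
  define G where "G n = 3 / s * arctan (x + of_int n * t)" for n :: int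
  have G_mono: "G n \<le> G (n + 1)" for n
    unfolding G_def using s t by (intro mult_left_mono arctan_monotone') (auto simp: algebra_simps)
  have G_bounds: "3 / s * (- (pi / 2)) \<le> G n" "G n \<le> 3 / s * (pi / 2)" for n
    unfolding G_def using s less_imp_le[OF arctan_lbound] less_imp_le[OF arctan_ubound]
    by (intro mult_left_mono; simp)+
  have G_increment: "1 / (1 + (x + of_int n * t)\<^sup>2) \<le> G (n + 1) - G n" for n
  proof -
    define y where "y = x + of_int n * t"
    have "0 < 1 + y\<^sup>2" by (simp add: add_pos_nonneg)
    then have "1 / (1 + y\<^sup>2) = 3 / s * (s / (3 * (1 + y\<^sup>2)))"
      using s by (simp add: field_simps)
    also have "\<dots> \<le> 3 / s * (arctan (y + s) - arctan y)"
      using s by (intro mult_left_mono arctan_increment_ge) auto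
    also have "\<dots> \<le> 3 / s * (arctan (y + t) - arctan y)"
      using s by (intro mult_left_mono diff_right_mono arctan_monotone') auto
    also have "\<dots> = G (n + 1) - G n"
      unfolding G_def y_def by (simp add: algebra_simps)
    finally show ?thesis unfolding y_def .
  qed
  have "(\<Sum>n\<in>N. 1 / (1 + (x + of_int n * t)\<^sup>2)) \<le> 3 / s * (pi / 2) - 3 / s * (- (pi / 2))"
    by (rule sum_le_telescoping[where G = G, OF G_mono G_bounds N G_increment])
  also have "\<dots> = 3 * pi * (1 / s)" by simp
  also have "\<dots> \<le> 3 * pi * (1 + 1 / t)"
    using t by (intro mult_left_mono) (auto simp: s_def min_def)
  finally show ?thesis .
qed

lemma sum_inverse_square_plus_square_le:
  fixes Q \<mu> x :: real
  assumes Q: "0 < Q" and \<mu>: "\<mu> \<noteq> 0" and N: "finite N"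
  shows "(\<Sum>n\<in>N. 1 / (Q\<^sup>2 + (of_int n * \<mu> + x)\<^sup>2)) \<le> 3 * pi * (1 + Q / \<bar>\<mu>\<bar>) / Q\<^sup>2"
proof -
  have scale: "1 / (Q\<^sup>2 + (of_int n * \<mu> + x)\<^sup>2) = 1 / (1 + (x / Q + of_int n * (\<mu> / Q))\<^sup>2) / Q\<^sup>2" for n
  proof -
    have "(1 + (x / Q + of_int n * (\<mu> / Q))\<^sup>2) * Q\<^sup>2 = Q\<^sup>2 + (of_int n * \<mu> + x)\<^sup>2"
      using Q by (simp add: power_divide distrib_right add_divide_distrib[symmetric] add.commute)
    then show ?thesis by (simp add: divide_divide_eq_left)
  qed
  have pos: "(\<Sum>n\<in>M. 1 / (1 + (x / Q + of_int n * (\<nu> / Q))\<^sup>2)) \<le> 3 * pi * (1 + Q / \<nu>)"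
    if "0 < \<nu>" "finite M" for \<nu> M
    using sum_inverse_one_plus_square_le[of "\<nu> / Q" M "x / Q"] that Q by simp
  have "(\<Sum>n\<in>N. 1 / (1 + (x / Q + of_int n * (\<mu> / Q))\<^sup>2)) \<le> 3 * pi * (1 + Q / \<bar>\<mu>\<bar>)"
  proof (cases "0 < \<mu>")
    case True
    then show ?thesis using pos[OF True N] by simp
  next
    case False
    have "(\<Sum>n\<in>N. 1 / (1 + (x / Q + of_int n * (\<mu> / Q))\<^sup>2))
        = (\<Sum>n\<in>uminus ` N. 1 / (1 + (x / Q + of_int n * (- \<mu> / Q))\<^sup>2))"
      by (simp add: sum.reindex inj_on_def)
    also have "\<dots> \<le> 3 * pi * (1 + Q / (- \<mu>))"
      using False \<mu> N by (intro pos) auto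
    finally show ?thesis using False by simp
  qed
  then show ?thesis
    unfolding scale sum_divide_distrib[symmetric] using Q by (simp add: divide_right_mono)
qed

lemma powr_one_minus_increment_ge:
  fixes x t :: real
  assumes x: "0 < x" and t: "1 < t"
  shows "(t - 1) * (x + 1) powr (- t) \<le> x powr (1 - t) - (x + 1) powr (1 - t)"
proof -
  have "((\<lambda>y. y powr (1 - t)) has_real_derivative (1 - t) * y powr (1 - t - 1)) (at y)"
    if "x \<le> y" for y
    using that x by (intro has_real_derivative_powr) auto
  then obtain z where z: "x < z" "z < x + 1"
    and eq: "(x + 1) powr (1 - t) - x powr (1 - t) = (x + 1 - x) * ((1 - t) * z powr (1 - t - 1))"
    using MVT2[of x "x + 1" "\<lambda>y. y powr (1 - t)" "\<lambda>y. (1 - t) * y powr (1 - t - 1)"] by auto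
  have "(t - 1) * (x + 1) powr (- t) \<le> (t - 1) * z powr (- t)"
    using x z t by (intro mult_left_mono powr_mono2') auto
  also have "\<dots> = x powr (1 - t) - (x + 1) powr (1 - t)"
    using eq by (simp add: algebra_simps)
  finally show ?thesis .
qed

lemma sum_max_powr_nonneg_le:
  fixes t A :: real
  assumes t: "1 < t" and A: "1 \<le> A" and N: "finite N" and N_nonneg: "\<And>n. n \<in> N \<Longrightarrow> 0 \<le> n"
  shows "(\<Sum>n\<in>N. max A \<bar>of_int n\<bar> powr - t) \<le> 3 powr t / (t - 1) * A powr (1 - t)"
proof -
  define k where "k = 3 powr t / (t - 1)"
  have k: "0 < k" using t by (simp add: k_def)
  define G where "G n = - k * (A + of_int (max n 0)) powr (1 - t)" for n :: int
  have G_mono: "G n \<le> G (n + 1)" for n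
    unfolding G_def using k t A by (intro mult_left_mono_neg powr_mono2') auto
  have G_bounds: "- k * A powr (1 - t) \<le> G n" "G n \<le> 0" for n
    unfolding G_def using k t A by (auto intro!: mult_left_mono_neg powr_mono2')
  have G_increment: "max A \<bar>of_int n\<bar> powr - t \<le> G (n + 1) - G n" if "n \<in> N" for n
  proof -
    define x where "x = A + of_int n"
    have x: "1 \<le> x" "A \<le> x" using N_nonneg[OF that] A by (auto simp: x_def)
    have "max A \<bar>of_int n\<bar> powr - t \<le> ((x + 1) / 3) powr - t"
      using N_nonneg[OF that] x A t by (intro powr_mono2') (auto simp: x_def)
    also have "\<dots> = k * ((t - 1) * (x + 1) powr (- t))"
      using t x by (simp add: k_def powr_divide powr_minus field_simps)
    also have "\<dots> \<le> k * (x powr (1 - t) - (x + 1) powr (1 - t))"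
      using x t k by (intro mult_left_mono powr_one_minus_increment_ge) auto
    also have "\<dots> = G (n + 1) - G n"
      using N_nonneg[OF that] unfolding G_def x_def by (simp add: algebra_simps)
    finally show ?thesis .
  qed
  have "(\<Sum>n\<in>N. max A \<bar>of_int n\<bar> powr - t) \<le> 0 - (- k * A powr (1 - t))"
    by (rule sum_le_telescoping[where G = G, OF G_mono G_bounds N G_increment])
  then show ?thesis by (simp add: k_def)
qed

lemma sum_max_powr_le:
  fixes t A :: real
  assumes t: "1 < t" and A: "1 \<le> A" and N: "finite N"
  shows "(\<Sum>n\<in>N. max A \<bar>of_int n\<bar> powr - t) \<le> 2 * 3 powr t / (t - 1) * A powr (1 - t)"
proof -
  let ?f = "\<lambda>n :: int. max A \<bar>of_int n\<bar> powr - t"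
  have "sum ?f (N - {0..}) = sum ?f (uminus ` (N - {0..}))"
    by (simp add: sum.reindex inj_on_def)
  moreover have "sum ?f (uminus ` (N - {0..})) \<le> 3 powr t / (t - 1) * A powr (1 - t)"
    using N by (intro sum_max_powr_nonneg_le t A) auto
  moreover have "sum ?f (N \<inter> {0..}) \<le> 3 powr t / (t - 1) * A powr (1 - t)"
    using N by (intro sum_max_powr_nonneg_le t A) auto
  ultimately show ?thesis
    using sum.Int_Diff[OF N, of ?f "{0..}"] by simp
qed

lemma sum_sum_max_powr_le:
  fixes s A :: real
  assumes s: "2 < s" and A: "1 \<le> A" and B: "finite B" and C: "finite C"
  shows "(\<Sum>b\<in>B. \<Sum>c\<in>C. max A (max \<bar>of_int b\<bar> \<bar>of_int c\<bar>) powr - s)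
           \<le> (4 * 3 powr (s / 2) / (s - 2))\<^sup>2 * A powr (2 - s)"
proof -
  define h where "h n = max A \<bar>of_int n\<bar> powr - (s / 2)" for n :: int
  define K where "K = 4 * 3 powr (s / 2) / (s - 2)"
  have split: "max A (max \<bar>of_int b\<bar> \<bar>of_int c\<bar>) powr - s \<le> h b * h c" for b c :: int
  proof -
    let ?M = "max A (max \<bar>of_int b\<bar> \<bar>of_int c\<bar>)"
    have "?M powr - s = ?M powr - (s / 2) * ?M powr - (s / 2)"
      by (simp add: powr_add[symmetric])
    also have "\<dots> \<le> h b * h c"
      unfolding h_def using s A by (intro mult_mono powr_mono2') auto
    finally show ?thesis .
  qed
  have sum_h: "sum h N \<le> K * A powr (1 - s / 2)" if "finite N" for N
    using sum_max_powr_le[of "s / 2" A N] s A that by (simp add: h_def K_def field_simps)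
  have "(\<Sum>b\<in>B. \<Sum>c\<in>C. max A (max \<bar>of_int b\<bar> \<bar>of_int c\<bar>) powr - s) \<le> (\<Sum>b\<in>B. \<Sum>c\<in>C. h b * h c)"
    by (intro sum_mono split)
  also have "\<dots> = sum h B * sum h C" by (simp add: sum_product)
  also have "\<dots> \<le> (K * A powr (1 - s / 2)) * (K * A powr (1 - s / 2))"
    using s A by (intro mult_mono sum_h B C sum_nonneg) (auto simp: h_def K_def)
  also have "\<dots> = K\<^sup>2 * A powr (2 - s)"
    using A by (simp add: power2_eq_square powr_add[symmetric] algebra_simps)
  finally show ?thesis unfolding K_def .
qed

section \<open>The pointwise bound\<close>

lemma pi_lam_ge_1: "1 \<le> pi * lam"
proof -
  have "2 / 5 \<le> lam"
    unfolding lam_def using sqrt2_less_2 by (intro frac_le) (auto intro: add_pos_nonneg)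
  then have "3 * (2 / 5) \<le> pi * lam"
    using pi_gt3 by (intro mult_mono) auto
  then show ?thesis by simp
qed

lemma abs_beta_le:
  fixes \<gamma> R :: real and l m :: "int ^ 3"
  assumes \<gamma>: "0 \<le> \<gamma>" "\<gamma> \<le> 1" and R: "0 < R"
  shows "\<bar>beta \<gamma> R l m\<bar> \<le> 3072 * pi\<^sup>2 * R powr (3 + \<gamma>)
           / (jbr (vlen (l + m)) * jbr (vlen (l - m)) * jbr (vlen (l + m) - vlen (l - m)))"
proof -
  define U V k where "U = vlen (l + m)" and "V = vlen (l - m)" and "k = pi * lam"
  define I where "I = integral {0..1} (\<lambda>r. r powr (2 + \<gamma>) * sinc ((k * V) * r) * sinc ((k * U) * r))"
  have k: "1 \<le> k" unfolding k_def by (rule pi_lam_ge_1)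
  have beta_eq: "beta \<gamma> R l m = (2 * R) powr (3 + \<gamma>) * (4 * pi)\<^sup>2 * I"
    unfolding beta_def I_def U_def V_def k_def by (simp add: ac_simps)
  have "x = 0 \<or> 1 \<le> x \<Longrightarrow> k * x = 0 \<or> 1 \<le> k * x" for x
    using k mult_mono[OF k, of 1 x] by auto
  then have kV: "k * V = 0 \<or> 1 \<le> k * V" and kU: "k * U = 0 \<or> 1 \<le> k * U"
    unfolding U_def V_def using vlen_eq_0_or_ge_1 by blast+
  have "\<bar>I\<bar> \<le> 12 / (jbr (k * V) * jbr (k * U) * jbr (k * U - k * V))"
    unfolding I_def using \<gamma> kV kU by (intro abs_integral_powr_sinc_sinc_le_jbr) auto
  also have "\<dots> \<le> 12 / (jbr U * jbr V * jbr (U - V))"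
    using k jbr_le_jbr_mult[OF k, of U] jbr_le_jbr_mult[OF k, of V] jbr_le_jbr_mult[OF k, of "U - V"]
    by (intro divide_left_mono)
       (auto simp: right_diff_distrib[symmetric] mult.commute[of "jbr U"] jbr_pos less_imp_le[OF jbr_pos]
         intro!: mult_mono mult_pos_pos)
  finally have I: "\<bar>I\<bar> \<le> 12 / (jbr U * jbr V * jbr (U - V))" .
  have "(2 * R) powr (3 + \<gamma>) = 2 powr (3 + \<gamma>) * R powr (3 + \<gamma>)"
    using R by (simp add: powr_mult)
  also have "\<dots> \<le> 2 powr 4 * R powr (3 + \<gamma>)"
    using \<gamma> by (intro mult_right_mono powr_mono) auto
  finally have two_R: "(2 * R) powr (3 + \<gamma>) \<le> 16 * R powr (3 + \<gamma>)" by simp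
  have "\<bar>beta \<gamma> R l m\<bar> = (2 * R) powr (3 + \<gamma>) * (16 * pi\<^sup>2) * \<bar>I\<bar>"
    unfolding beta_eq by (simp add: abs_mult power_mult_distrib)
  also have "\<dots> \<le> (16 * R powr (3 + \<gamma>)) * (16 * pi\<^sup>2) * (12 / (jbr U * jbr V * jbr (U - V)))"
    using two_R I by (intro mult_mono) auto
  finally show ?thesis unfolding U_def V_def by (simp add: ac_simps)
qed

lemma beta_sym: "beta \<gamma> R l m = beta \<gamma> R m l"
  unfolding beta_def by (simp add: vlen_diff_commute add.commute)

section \<open>The weight of the square sums\<close>

text \<open>|l|^\<delta> times the square of the part (1) bound on |\<beta>(l,m)| / R^(3+\<gamma>), without the constant.\<close>

definition beta_weight :: "real \<Rightarrow> int ^ 3 \<Rightarrow> int ^ 3 \<Rightarrow> real" where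
  "beta_weight \<delta> m l = rpow (vlen l) \<delta>
     / ((1 + (vlen (l + m))\<^sup>2) * (1 + (vlen (l - m))\<^sup>2) * (1 + (vlen (l + m) - vlen (l - m))\<^sup>2))"

lemma rpow_nonneg: "0 \<le> rpow x d"
  unfolding rpow_def by simp

lemma beta_weight_nonneg: "0 \<le> beta_weight \<delta> m l"
  unfolding beta_weight_def by (intro divide_nonneg_nonneg mult_nonneg_nonneg rpow_nonneg) auto

lemma beta_weight_uminus: "beta_weight \<delta> (- m) l = beta_weight \<delta> m l"
  unfolding beta_weight_def by (simp add: power2_commute ac_simps)

lemma rpow_le_2_powr:
  fixes L M \<delta> :: real
  assumes L: "0 \<le> L" "L \<le> 2 * M" and M: "1 \<le> M" and \<delta>: "0 \<le> \<delta>" "\<delta> \<le> 1"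
  shows "rpow L \<delta> \<le> 2 * M powr \<delta>"
proof (cases "L = 0")
  case True
  then have "rpow L \<delta> \<le> 1" unfolding rpow_def by simp
  also have "\<dots> \<le> 2 * M powr \<delta>" using M \<delta> ge_one_powr_ge_zero[of M \<delta>] by linarith
  finally show ?thesis .
next
  case False
  then have "rpow L \<delta> \<le> (2 * M) powr \<delta>"
    unfolding rpow_def using L \<delta> by (simp add: powr_mono2)
  also have "\<dots> = 2 powr \<delta> * M powr \<delta>" using M by (simp add: powr_mult)
  also have "\<dots> \<le> 2 * M powr \<delta>"
    using \<delta> powr_mono[of \<delta> 1 2] by (intro mult_right_mono) auto
  finally show ?thesis .
qed

lemma divide_le_powr_minus_4:
  fixes w P M Y c \<delta> :: real
  assumes w: "0 \<le> w" "w \<le> 2 * M powr \<delta>" and pos: "0 < M" "0 < Y" "0 < c"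
    and P: "c * M ^ 4 * Y \<le> P"
  shows "w / P \<le> 2 / c * M powr (\<delta> - 4) / Y"
proof -
  have "w / P \<le> 2 * M powr \<delta> / (c * M ^ 4 * Y)"
    using w pos P by (intro frac_le) auto
  also have "\<dots> = 2 / c * M powr (\<delta> - 4) / Y"
    using pos by (simp add: powr_diff powr_realpow field_simps)
  finally show ?thesis .
qed

lemma beta_weight_le_far:
  fixes l m :: "int ^ 3" and Q \<delta> :: real
  assumes far: "2 * vlen m < vlen l" and Q: "0 < Q" "Q \<le> vlen l" and \<delta>: "\<delta> \<le> 2"
  shows "beta_weight \<delta> m l \<le> 16 * Q powr (\<delta> - 2) / (Q\<^sup>2 + (rvec l \<bullet> rvec m)\<^sup>2)"
proof -
  define L M U V D
    where "L = vlen l" and "M = vlen m" and "U = vlen (l + m)" and "V = vlen (l - m)"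
      and "D = rvec l \<bullet> rvec m"
  have M: "0 \<le> M" unfolding M_def by (rule vlen_nonneg)
  have L: "0 < L" using far M unfolding L_def M_def by linarith
  have "L / 2 \<le> U" "L / 2 \<le> V"
    using vlen_diff_le_vlen_add_diff[of l m] far unfolding L_def M_def U_def V_def by linarith+
  then have UV: "L\<^sup>2 / 4 \<le> 1 + U\<^sup>2" "L\<^sup>2 / 4 \<le> 1 + V\<^sup>2"
    using L power_mono[of "L / 2" U 2] power_mono[of "L / 2" V 2] by (auto simp: power_divide)
  have "U + V \<le> 4 * L"
    using vlen_add_plus_vlen_diff_le[of l m] far M unfolding L_def M_def U_def V_def by linarith
  then have "4 * \<bar>D\<bar> \<le> 4 * L * \<bar>U - V\<bar>"
    using abs_inner_eq_vlen_add_diff[of l m] unfolding U_def V_def D_def by (simp add: mult_right_mono)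
  then have "D\<^sup>2 \<le> L\<^sup>2 * (U - V)\<^sup>2"
    using abs_le_square_iff[of D "L * (U - V)"] L by (simp add: abs_mult power_mult_distrib)
  then have "L\<^sup>2 * (L\<^sup>2 + D\<^sup>2) / 16 \<le> L\<^sup>2 * (L\<^sup>2 * (1 + (U - V)\<^sup>2)) / 16"
    by (intro divide_right_mono mult_left_mono) (auto simp: distrib_left)
  also have "\<dots> = (L\<^sup>2 / 4) * (L\<^sup>2 / 4) * (1 + (U - V)\<^sup>2)"
    by (simp add: field_simps)
  also have "\<dots> \<le> (1 + U\<^sup>2) * (1 + V\<^sup>2) * (1 + (U - V)\<^sup>2)"
    using UV by (intro mult_mono) auto
  finally have P: "L\<^sup>2 * (L\<^sup>2 + D\<^sup>2) / 16 \<le> (1 + U\<^sup>2) * (1 + V\<^sup>2) * (1 + (U - V)\<^sup>2)" .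
  have "beta_weight \<delta> m l \<le> L powr \<delta> / (L\<^sup>2 * (L\<^sup>2 + D\<^sup>2) / 16)"
    unfolding beta_weight_def rpow_def using L P
    by (fold L_def U_def V_def) (intro frac_le; simp add: add_pos_nonneg)
  also have "\<dots> = 16 * L powr (\<delta> - 2) / (L\<^sup>2 + D\<^sup>2)"
    using L by (simp add: powr_diff powr_realpow field_simps add_pos_nonneg)
  also have "\<dots> \<le> 16 * Q powr (\<delta> - 2) / (Q\<^sup>2 + D\<^sup>2)"
    using Q \<delta> unfolding L_def
    by (intro frac_le mult_left_mono powr_mono2' add_right_mono power_mono) (auto intro: add_pos_nonneg)
  finally show ?thesis unfolding D_def .
qed

lemma beta_weight_le_mid:
  fixes l m :: "int ^ 3" and \<delta> :: real
  assumes M: "1 \<le> vlen m" and bounded: "vlen l \<le> 2 * vlen m" and \<delta>: "0 \<le> \<delta>" "\<delta> \<le> 1"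
    and U: "vlen m / 2 \<le> vlen (l + m)" and V: "vlen m / 2 \<le> vlen (l - m)"
  shows "beta_weight \<delta> m l \<le> 32 * vlen m powr (\<delta> - 4) / (1 + (rvec l \<bullet> rvec m / (2 * vlen m))\<^sup>2)"
proof -
  define L M U V D
    where "L = vlen l" and "M = vlen m" and "U = vlen (l + m)" and "V = vlen (l - m)"
      and "D = rvec l \<bullet> rvec m"
  define X where "X = 1 + (D / (2 * M))\<^sup>2"
  have M0: "0 < M" using M unfolding M_def by linarith
  have UV: "M\<^sup>2 / 4 \<le> 1 + U\<^sup>2" "M\<^sup>2 / 4 \<le> 1 + V\<^sup>2"
    using U V M0 power_mono[of "M / 2" U 2] power_mono[of "M / 2" V 2]
    unfolding M_def U_def V_def by (auto simp: power_divide)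
  have "U + V \<le> 6 * M"
    using vlen_add_plus_vlen_diff_le[of l m] bounded unfolding L_def M_def U_def V_def by linarith
  then have "4 * \<bar>D\<bar> \<le> 6 * M * \<bar>U - V\<bar>"
    using abs_inner_eq_vlen_add_diff[of l m] unfolding U_def V_def D_def by (simp add: mult_right_mono)
  then have "\<bar>D / (2 * M)\<bar> \<le> \<bar>U - V\<bar>" using M0 by (simp add: abs_div field_simps)
  then have "X \<le> 1 + (U - V)\<^sup>2" unfolding X_def by (simp only: abs_le_square_iff)
  then have "M\<^sup>2 / 4 * (M\<^sup>2 / 4) * X \<le> (1 + U\<^sup>2) * (1 + V\<^sup>2) * (1 + (U - V)\<^sup>2)"
    using UV by (intro mult_mono) (auto simp: X_def)
  then have "1 / 16 * M ^ 4 * X \<le> (1 + U\<^sup>2) * (1 + V\<^sup>2) * (1 + (U - V)\<^sup>2)"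
    by (simp add: power2_eq_square power4_eq_xxxx)
  moreover have "rpow L \<delta> \<le> 2 * M powr \<delta>"
    using bounded M \<delta> unfolding L_def M_def by (intro rpow_le_2_powr vlen_nonneg)
  ultimately have "rpow L \<delta> / ((1 + U\<^sup>2) * (1 + V\<^sup>2) * (1 + (U - V)\<^sup>2)) \<le> 2 / (1 / 16) * M powr (\<delta> - 4) / X"
    using M0 by (intro divide_le_powr_minus_4 rpow_nonneg) (auto simp: X_def add_pos_nonneg)
  then show ?thesis unfolding beta_weight_def L_def M_def U_def V_def D_def X_def by simp
qed

lemma beta_weight_le_near:
  fixes l m :: "int ^ 3" and \<delta> :: real
  assumes M: "1 \<le> vlen m" and bounded: "vlen l \<le> 2 * vlen m" and \<delta>: "0 \<le> \<delta>" "\<delta> \<le> 1"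
    and V: "vlen (l - m) < vlen m / 2"
  shows "beta_weight \<delta> m l \<le> 18 * vlen m powr (\<delta> - 4) / (1 + (of_int (l $ j) - of_int (m $ j))\<^sup>2)"
proof -
  define L M U V D Y
    where "L = vlen l" and "M = vlen m" and "U = vlen (l + m)" and "V = vlen (l - m)"
      and "D = rvec l \<bullet> rvec m" and "Y = 1 + (of_int (l $ j) - of_int (m $ j) :: real)\<^sup>2"
  have M0: "0 < M" using M unfolding M_def by linarith
  have V0: "0 \<le> V" unfolding V_def by (rule vlen_nonneg)
  have U: "3 / 2 * M \<le> U"
    using vlen_add_plus_vlen_diff_ge(2)[where l = l and m = m] V unfolding M_def U_def V_def by linarith
  then have "M\<^sup>2 \<le> U\<^sup>2" "(3 / 2 * M)\<^sup>2 \<le> U\<^sup>2"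
    using M0 by (intro power_mono; simp)+
  moreover have "(3 / 2 * M)\<^sup>2 = 9 / 4 * M\<^sup>2" by (simp add: power2_eq_square)
  ultimately have U2: "9 / 4 * M\<^sup>2 \<le> U\<^sup>2" by linarith
  moreover have "V\<^sup>2 \<le> M\<^sup>2 / 4"
    using V V0 power_mono[of V "M / 2" 2] unfolding V_def M_def by (auto simp: power_divide)
  ultimately have "2 * M\<^sup>2 \<le> 4 * \<bar>D\<bar>"
    using vlen_add_squared_diff[of l m] unfolding U_def V_def D_def by linarith
  moreover have "U + V \<le> 6 * M"
    using vlen_add_plus_vlen_diff_le[of l m] bounded unfolding L_def M_def U_def V_def by linarith
  ultimately have "2 * M\<^sup>2 \<le> 6 * M * \<bar>U - V\<bar>"
    using abs_inner_eq_vlen_add_diff[of l m] mult_right_mono[of "U + V" "6 * M" "\<bar>U - V\<bar>"]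
    unfolding U_def V_def D_def by simp
  then have "M / 3 \<le> \<bar>U - V\<bar>" using M0 by (simp add: power2_eq_square field_simps)
  then have UV: "M\<^sup>2 / 9 \<le> 1 + (U - V)\<^sup>2"
    using M0 abs_le_square_iff[of "M / 3" "U - V"] by (simp add: power_divide)
  have "\<bar>of_int (l $ j) - of_int (m $ j)\<bar> \<le> V"
    using abs_component_le_vlen[of "l - m" j] unfolding V_def by simp
  then have "Y \<le> 1 + V\<^sup>2"
    unfolding Y_def using abs_le_square_iff[of "of_int (l $ j) - of_int (m $ j)" V] V0 by simp
  then have "M\<^sup>2 * Y * (M\<^sup>2 / 9) \<le> (1 + U\<^sup>2) * (1 + V\<^sup>2) * (1 + (U - V)\<^sup>2)"
    using \<open>M\<^sup>2 \<le> U\<^sup>2\<close> UV by (intro mult_mono) (auto simp: Y_def)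
  then have "1 / 9 * M ^ 4 * Y \<le> (1 + U\<^sup>2) * (1 + V\<^sup>2) * (1 + (U - V)\<^sup>2)"
    by (simp add: power2_eq_square power4_eq_xxxx field_simps)
  moreover have "rpow L \<delta> \<le> 2 * M powr \<delta>"
    using bounded M \<delta> unfolding L_def M_def by (intro rpow_le_2_powr vlen_nonneg)
  ultimately have "rpow L \<delta> / ((1 + U\<^sup>2) * (1 + V\<^sup>2) * (1 + (U - V)\<^sup>2)) \<le> 2 / (1 / 9) * M powr (\<delta> - 4) / Y"
    using M0 by (intro divide_le_powr_minus_4 rpow_nonneg) (auto simp: Y_def add_pos_nonneg)
  then show ?thesis unfolding beta_weight_def L_def M_def U_def V_def Y_def by simp
qed

lemma beta_weight_le_bounded:
  fixes l m :: "int ^ 3" and \<delta> :: real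
  assumes M: "1 \<le> vlen m" and bounded: "vlen l \<le> 2 * vlen m" and \<delta>: "0 \<le> \<delta>" "\<delta> \<le> 1"
  shows "beta_weight \<delta> m l \<le> 32 * vlen m powr (\<delta> - 4) *
           (1 / (1 + (rvec l \<bullet> rvec m / (2 * vlen m))\<^sup>2)
            + 1 / (1 + (of_int (l $ j) - of_int (m $ j))\<^sup>2)
            + 1 / (1 + (of_int (l $ j) + of_int (m $ j))\<^sup>2))"
    (is "_ \<le> ?c * (?X + ?Y + ?Z)")
proof -
  have XYZ: "0 \<le> ?X" "0 \<le> ?Y" "0 \<le> ?Z" by (simp_all add: add_nonneg_nonneg)
  have c: "0 \<le> ?c" by simp
  consider "vlen m / 2 \<le> vlen (l + m)" "vlen m / 2 \<le> vlen (l - m)"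
    | "vlen (l - m) < vlen m / 2" | "vlen (l + m) < vlen m / 2"
    by linarith
  then show ?thesis
  proof cases
    case 1
    then have "beta_weight \<delta> m l \<le> ?c * ?X"
      using beta_weight_le_mid[OF M bounded \<delta>] by simp
    also have "\<dots> \<le> ?c * (?X + ?Y + ?Z)" using XYZ c by (intro mult_left_mono) auto
    finally show ?thesis .
  next
    case 2
    then have "beta_weight \<delta> m l \<le> 18 * vlen m powr (\<delta> - 4) * ?Y"
      using beta_weight_le_near[OF M bounded \<delta>] by simp
    also have "\<dots> \<le> ?c * (?X + ?Y + ?Z)" using XYZ by (intro mult_mono) auto
    finally show ?thesis .
  next
    case 3 \<comment> \<open>replacing m by -m exchanges l + m and l - m\<close>
    have "beta_weight \<delta> m l = beta_weight \<delta> (- m) l" by (rule beta_weight_uminus[symmetric])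
    also have "\<dots> \<le> 18 * vlen m powr (\<delta> - 4) * ?Z"
      using beta_weight_le_near[of "- m" l \<delta> j] M bounded \<delta> 3 by (simp add: vlen_uminus)
    also have "\<dots> \<le> ?c * (?X + ?Y + ?Z)" using XYZ by (intro mult_mono) auto
    finally show ?thesis .
  qed
qed

text \<open>The second term is only needed when |l| \<le> 2|m|, which forces B \<le> 2|m|; unlike |l|,
  the bound B depends only on the two coordinates transverse to direction j.\<close>

lemma beta_weight_le:
  fixes l m :: "int ^ 3" and \<delta> :: real and j :: 3
  assumes M: "1 \<le> vlen m" and \<delta>: "0 \<le> \<delta>" "\<delta> < 1"
  defines "B \<equiv> max \<bar>of_int (l $ (j + 1))\<bar> \<bar>of_int (l $ (j + 2))\<bar>"
  defines "Q \<equiv> max (2 * vlen m) B"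
  shows "beta_weight \<delta> m l \<le> 16 * Q powr (\<delta> - 2) / (Q\<^sup>2 + (rvec l \<bullet> rvec m)\<^sup>2)
    + (if B \<le> 2 * vlen m then 32 * vlen m powr (\<delta> - 4) *
           (1 / (1 + (rvec l \<bullet> rvec m / (2 * vlen m))\<^sup>2)
            + 1 / (1 + (of_int (l $ j) - of_int (m $ j))\<^sup>2)
            + 1 / (1 + (of_int (l $ j) + of_int (m $ j))\<^sup>2)) else 0)"
    (is "_ \<le> ?far + ?near")
proof (cases "2 * vlen m < vlen l")
  case True
  have "B \<le> vlen l" unfolding B_def using abs_component_le_vlen[of l] by simp
  then have "beta_weight \<delta> m l \<le> ?far"
    using True M \<delta> by (intro beta_weight_le_far) (auto simp: Q_def)
  moreover have "0 \<le> ?near" by (simp add: add_nonneg_nonneg)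
  ultimately show ?thesis by linarith
next
  case False
  then have "B \<le> 2 * vlen m"
    unfolding B_def using abs_component_le_vlen[of l "j + 1"] abs_component_le_vlen[of l "j + 2"] by auto
  then have "beta_weight \<delta> m l \<le> ?near"
    using False M \<delta> beta_weight_le_bounded[of m l \<delta> j] by simp
  moreover have "0 \<le> ?far" by simp
  ultimately show ?thesis by linarith
qed

section \<open>Summing the weight\<close>

lemma sum_fiber_far_le:
  fixes M Q \<mu> x \<delta> :: real
  assumes M: "0 < M" "M \<le> 2 * \<bar>\<mu>\<bar>" and Q: "2 * M \<le> Q" and N: "finite N"
  shows "(\<Sum>n\<in>N. 16 * Q powr (\<delta> - 2) / (Q\<^sup>2 + (of_int n * \<mu> + x)\<^sup>2)) \<le> 144 * pi * Q powr (\<delta> - 3) / M"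
proof -
  have Q0: "0 < Q" using M Q by linarith
  have "Q / \<bar>\<mu>\<bar> \<le> Q / (M / 2)" using M Q0 by (intro divide_left_mono) auto
  moreover have "1 \<le> Q / M" using M Q by simp
  ultimately have "1 + Q / \<bar>\<mu>\<bar> \<le> 3 * (Q / M)" by simp
  have "(\<Sum>n\<in>N. 16 * Q powr (\<delta> - 2) / (Q\<^sup>2 + (of_int n * \<mu> + x)\<^sup>2))
      = 16 * Q powr (\<delta> - 2) * (\<Sum>n\<in>N. 1 / (Q\<^sup>2 + (of_int n * \<mu> + x)\<^sup>2))"
    by (simp add: sum_distrib_left)
  also have "\<dots> \<le> 16 * Q powr (\<delta> - 2) * (3 * pi * (1 + Q / \<bar>\<mu>\<bar>) / Q\<^sup>2)"
    using Q0 M N by (intro mult_left_mono sum_inverse_square_plus_square_le) auto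
  also have "\<dots> \<le> 16 * Q powr (\<delta> - 2) * (3 * pi * (3 * (Q / M)) / Q\<^sup>2)"
    using \<open>1 + Q / \<bar>\<mu>\<bar> \<le> 3 * (Q / M)\<close> by (intro mult_left_mono divide_right_mono) auto
  also have "\<dots> = 144 * pi * Q powr (\<delta> - 3) / M"
    using Q0 M by (simp add: powr_diff powr_numeral field_simps power2_eq_square power3_eq_cube)
  finally show ?thesis .
qed

lemma sum_fiber_near_le:
  fixes M \<mu> x \<delta> :: real
  assumes M: "0 < M" "M \<le> 2 * \<bar>\<mu>\<bar>" and \<delta>: "0 \<le> \<delta>" and N: "finite N"
  shows "(\<Sum>n\<in>N. 32 * M powr (\<delta> - 4) * (1 / (1 + ((of_int n * \<mu> + x) / (2 * M))\<^sup>2)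
                 + 1 / (1 + (of_int n - \<mu>)\<^sup>2) + 1 / (1 + (of_int n + \<mu>)\<^sup>2)))
           \<le> 6912 * pi * (2 * M) powr (\<delta> - 3) / M"
proof -
  have \<mu>: "\<mu> \<noteq> 0" using M by auto
  have "(of_int n * \<mu> + x) / (2 * M) = of_int n * (\<mu> / (2 * M)) + x / (2 * M)" for n
    using M by (simp add: field_simps)
  then have "(\<Sum>n\<in>N. 1 / (1 + ((of_int n * \<mu> + x) / (2 * M))\<^sup>2))
      \<le> 3 * pi * (1 + 1 / \<bar>\<mu> / (2 * M)\<bar>)"
    using sum_inverse_square_plus_square_le[of 1 "\<mu> / (2 * M)" N "x / (2 * M)"] M \<mu> N by simp
  also have "\<dots> \<le> 3 * pi * 5"
    using M \<mu> by (intro mult_left_mono) (auto simp: abs_div field_simps)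
  finally have "(\<Sum>n\<in>N. 1 / (1 + ((of_int n * \<mu> + x) / (2 * M))\<^sup>2)) \<le> 15 * pi" by simp
  moreover have "(\<Sum>n\<in>N. 1 / (1 + (of_int n - \<mu>)\<^sup>2)) \<le> 6 * pi"
    using sum_inverse_square_plus_square_le[of 1 1 N "- \<mu>"] N by simp
  moreover have "(\<Sum>n\<in>N. 1 / (1 + (of_int n + \<mu>)\<^sup>2)) \<le> 6 * pi"
    using sum_inverse_square_plus_square_le[of 1 1 N \<mu>] N by simp
  ultimately have "(\<Sum>n\<in>N. 32 * M powr (\<delta> - 4) * (1 / (1 + ((of_int n * \<mu> + x) / (2 * M))\<^sup>2)
                 + 1 / (1 + (of_int n - \<mu>)\<^sup>2) + 1 / (1 + (of_int n + \<mu>)\<^sup>2)))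
      \<le> 32 * M powr (\<delta> - 4) * (27 * pi)"
    unfolding sum_distrib_left[symmetric] by (intro mult_left_mono) (simp_all add: sum.distrib)
  also have "\<dots> \<le> 32 * (8 * (2 * M) powr (\<delta> - 3) / M) * (27 * pi)"
  proof -
    have "1 / 8 \<le> 2 powr (\<delta> - 3)"
      using \<delta> powr_mono[of "-3" "\<delta> - 3" 2] by (simp add: powr_minus powr_numeral)
    then have "M powr (\<delta> - 3) \<le> 8 * (2 * M) powr (\<delta> - 3)"
      using M by (simp add: powr_mult)
    then show ?thesis
      using M by (intro mult_right_mono mult_left_mono)
        (auto simp: powr_diff field_simps powr_numeral power3_eq_cube power4_eq_xxxx)
  qed
  finally show ?thesis by (simp add: ac_simps)
qed

lemma sum_beta_weight_fiber_le:
  fixes m :: "int ^ 3" and \<delta> :: real and j :: 3 and b c :: int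
  assumes M: "1 \<le> vlen m" and j: "vlen m \<le> 2 * \<bar>of_int (m $ j)\<bar>"
    and \<delta>: "0 \<le> \<delta>" "\<delta> < 1" and N: "finite N"
  shows "(\<Sum>n\<in>N. beta_weight \<delta> m (fiber_point j n b c))
           \<le> 7056 * pi / vlen m * max (2 * vlen m) (max \<bar>of_int b\<bar> \<bar>of_int c\<bar>) powr (\<delta> - 3)"
proof -
  define M \<mu> x B Q
    where "M = vlen m" and "\<mu> = (of_int (m $ j) :: real)"
      and "x = (of_int b * of_int (m $ (j + 1)) + of_int c * of_int (m $ (j + 2)) :: real)"
      and "B = max \<bar>of_int b\<bar> \<bar>of_int c :: real\<bar>" and "Q = max (2 * M) B"
  define near where "near n = 1 / (1 + ((of_int n * \<mu> + x) / (2 * M))\<^sup>2)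
    + 1 / (1 + (of_int n - \<mu>)\<^sup>2) + 1 / (1 + (of_int n + \<mu>)\<^sup>2)" for n :: int
  have M0: "0 < M" using M unfolding M_def by linarith
  have \<mu>: "M \<le> 2 * \<bar>\<mu>\<bar>" using j unfolding M_def \<mu>_def .
  have "beta_weight \<delta> m (fiber_point j n b c)
      \<le> 16 * Q powr (\<delta> - 2) / (Q\<^sup>2 + (of_int n * \<mu> + x)\<^sup>2)
        + (if B \<le> 2 * M then 32 * M powr (\<delta> - 4) * near n else 0)" for n
    using beta_weight_le[OF M \<delta>, of "fiber_point j n b c" j]
    unfolding inner_fiber_point fiber_point_nth
    unfolding M_def[symmetric] \<mu>_def[symmetric] x_def[symmetric] B_def[symmetric] Q_def[symmetric]
      near_def[symmetric] .
  then have "(\<Sum>n\<in>N. beta_weight \<delta> m (fiber_point j n b c))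
      \<le> (\<Sum>n\<in>N. 16 * Q powr (\<delta> - 2) / (Q\<^sup>2 + (of_int n * \<mu> + x)\<^sup>2))
        + (\<Sum>n\<in>N. if B \<le> 2 * M then 32 * M powr (\<delta> - 4) * near n else 0)"
    unfolding sum.distrib[symmetric] by (intro sum_mono)
  also have "\<dots> \<le> 144 * pi * Q powr (\<delta> - 3) / M + 6912 * pi * Q powr (\<delta> - 3) / M"
  proof (rule add_mono)
    show "(\<Sum>n\<in>N. 16 * Q powr (\<delta> - 2) / (Q\<^sup>2 + (of_int n * \<mu> + x)\<^sup>2)) \<le> 144 * pi * Q powr (\<delta> - 3) / M"
      using M0 \<mu> N by (intro sum_fiber_far_le) (auto simp: Q_def)
    show "(\<Sum>n\<in>N. if B \<le> 2 * M then 32 * M powr (\<delta> - 4) * near n else 0)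
        \<le> 6912 * pi * Q powr (\<delta> - 3) / M"
    proof (cases "B \<le> 2 * M")
      case True
      then show ?thesis using sum_fiber_near_le[OF M0 \<mu> \<delta>(1) N, of x] unfolding near_def Q_def by simp
    qed (use M0 in simp)
  qed
  finally show ?thesis unfolding M_def Q_def B_def by simp
qed

lemma powr_minus_1_div_le_jbr_powr:
  fixes M \<delta> :: real
  assumes M: "1 \<le> M" and \<delta>: "0 \<le> \<delta>" "\<delta> < 1"
  shows "(2 * M) powr (\<delta> - 1) / M \<le> 4 * jbr M powr (\<delta> - 2)"
proof -
  have M0: "0 < M" using M by linarith
  have "jbr M \<le> sqrt 2 * M" using jbr_le_sqrt2_abs[of M] M by simp
  also have "\<dots> \<le> 2 * M" using M0 sqrt2_less_2 by (intro mult_right_mono) auto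
  finally have jbr_M: "jbr M / 2 \<le> M" by simp
  have "1 / 4 \<le> 2 powr (\<delta> - 2)"
    using \<delta> powr_mono[of "-2" "\<delta> - 2" 2] by (simp add: powr_minus powr_numeral)
  have "(2 * M) powr (\<delta> - 1) / M \<le> M powr (\<delta> - 1) / M"
    using M0 \<delta> by (intro divide_right_mono powr_mono2') auto
  also have "\<dots> = M powr (\<delta> - 2)"
    using M0 by (simp add: powr_diff powr_numeral power2_eq_square)
  also have "\<dots> \<le> (jbr M / 2) powr (\<delta> - 2)"
    using jbr_M \<delta> jbr_pos[of M] by (intro powr_mono2') auto
  also have "\<dots> = jbr M powr (\<delta> - 2) / 2 powr (\<delta> - 2)"
    using jbr_pos[of M] by (simp add: powr_divide)
  also have "\<dots> \<le> jbr M powr (\<delta> - 2) / (1 / 4)"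
    using \<open>1 / 4 \<le> 2 powr (\<delta> - 2)\<close> by (intro divide_left_mono) auto
  finally show ?thesis by simp
qed

lemma sum_beta_weight_le_nonzero:
  fixes m :: "int ^ 3" and \<delta> :: real
  assumes M: "1 \<le> vlen m" and \<delta>: "0 \<le> \<delta>" "\<delta> < 1" and F: "finite F"
  shows "sum (beta_weight \<delta> m) F
           \<le> 28224 * pi * (4 * 3 powr ((3 - \<delta>) / 2) / (1 - \<delta>))\<^sup>2 * jbr (vlen m) powr (\<delta> - 2)"
proof -
  obtain j where j: "vlen m \<le> 2 * \<bar>of_int (m $ j)\<bar>" by (rule exists_large_component)
  define K where "K = (4 * 3 powr ((3 - \<delta>) / 2) / (1 - \<delta>))\<^sup>2"
  define g where "g b c = 7056 * pi / vlen m * max (2 * vlen m) (max \<bar>of_int b\<bar> \<bar>of_int c\<bar>) powr (\<delta> - 3)"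
    for b c :: int
  have "sum (beta_weight \<delta> m) F \<le> 7056 * pi / vlen m * (K * (2 * vlen m) powr (\<delta> - 1))"
  proof (rule sum_le_by_fibers[where j = j and g = g, OF beta_weight_nonneg _ _ F])
    fix b c :: int and N :: "int set"
    assume "finite N"
    then show "(\<Sum>n\<in>N. beta_weight \<delta> m (fiber_point j n b c)) \<le> g b c"
      unfolding g_def by (rule sum_beta_weight_fiber_le[OF M j \<delta>])
  next
    fix B C :: "int set"
    assume "finite B" "finite C"
    then have "(\<Sum>b\<in>B. \<Sum>c\<in>C. max (2 * vlen m) (max \<bar>of_int b\<bar> \<bar>of_int c\<bar>) powr (\<delta> - 3))
        \<le> K * (2 * vlen m) powr (\<delta> - 1)"
      using sum_sum_max_powr_le[of "3 - \<delta>" "2 * vlen m" B C] M \<delta> by (simp add: K_def)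
    then show "(\<Sum>b\<in>B. \<Sum>c\<in>C. g b c) \<le> 7056 * pi / vlen m * (K * (2 * vlen m) powr (\<delta> - 1))"
      unfolding g_def sum_distrib_left[symmetric] using M by (intro mult_left_mono) auto
  qed
  also have "\<dots> = 7056 * pi * K * ((2 * vlen m) powr (\<delta> - 1) / vlen m)"
    by simp
  also have "\<dots> \<le> 7056 * pi * K * (4 * jbr (vlen m) powr (\<delta> - 2))"
    using M \<delta> by (intro mult_left_mono powr_minus_1_div_le_jbr_powr) (auto simp: K_def)
  finally show ?thesis unfolding K_def by simp
qed

lemma rpow_le_jbr_powr:
  fixes L \<delta> :: real
  assumes "0 \<le> L" "0 \<le> \<delta>"
  shows "rpow L \<delta> \<le> jbr L powr \<delta>"
proof (cases "L = 0")
  case True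
  then show ?thesis using assms jbr_ge_1[of 0] by (simp add: rpow_def ge_one_powr_ge_zero)
next
  case False
  then show ?thesis using assms abs_le_jbr[of L] by (simp add: rpow_def powr_mono2)
qed

lemma beta_weight_zero_fiber_le:
  fixes \<delta> :: real and b c n :: int
  assumes \<delta>: "0 \<le> \<delta>" "\<delta> \<le> 2"
  defines "Q \<equiv> max 1 (max \<bar>of_int b\<bar> \<bar>of_int c\<bar>)"
  shows "beta_weight \<delta> 0 (fiber_point j n b c) \<le> Q powr (\<delta> - 2) / (Q\<^sup>2 + (of_int n * 1 + 0)\<^sup>2)"
proof -
  define L where "L = vlen (fiber_point j n b c)"
  define J where "J = jbr L"
  have J: "0 < J" unfolding J_def by (rule jbr_pos)
  have Q1: "1 \<le> Q" unfolding Q_def by simp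
  have J2: "J\<^sup>2 = 1 + (of_int n)\<^sup>2 + (of_int b)\<^sup>2 + (of_int c)\<^sup>2"
    unfolding J_def L_def jbr_squared vlen_fiber_point_squared by simp
  have "Q = 1 \<or> Q = \<bar>of_int b\<bar> \<or> Q = \<bar>of_int c\<bar>" unfolding Q_def max_def by auto
  then have "Q\<^sup>2 \<le> 1 + (of_int b)\<^sup>2 + (of_int c)\<^sup>2" by (elim disjE) simp_all
  then have QJ: "Q\<^sup>2 + (of_int n)\<^sup>2 \<le> J\<^sup>2" using J2 by simp
  then have "Q\<^sup>2 \<le> J\<^sup>2" using zero_le_power2[of "of_int n :: real"] by linarith
  then have "Q \<le> J" by (rule power2_le_imp_le) (use J in simp)
  have "beta_weight \<delta> 0 (fiber_point j n b c) = rpow L \<delta> / (J\<^sup>2)\<^sup>2"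
    unfolding beta_weight_def J_def L_def jbr_squared by (simp add: power2_eq_square)
  also have "\<dots> \<le> J powr \<delta> / (J\<^sup>2)\<^sup>2"
    unfolding J_def L_def using \<delta> by (intro divide_right_mono rpow_le_jbr_powr vlen_nonneg) auto
  also have "\<dots> = J powr (\<delta> - 2) / J\<^sup>2"
    using J by (simp add: powr_diff powr_numeral power2_eq_square)
  also have "\<dots> \<le> Q powr (\<delta> - 2) / (Q\<^sup>2 + (of_int n * 1 + 0)\<^sup>2)"
    using QJ \<open>Q \<le> J\<close> \<delta> Q1 by (intro frac_le powr_mono2') (auto simp: add_pos_nonneg)
  finally show ?thesis .
qed

lemma sum_beta_weight_zero_le:
  fixes \<delta> :: real
  assumes \<delta>: "0 \<le> \<delta>" "\<delta> < 1" and F: "finite F"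
  shows "sum (beta_weight \<delta> 0) F \<le> 6 * pi * (4 * 3 powr ((3 - \<delta>) / 2) / (1 - \<delta>))\<^sup>2"
proof -
  define g where "g b c = 6 * pi * max 1 (max \<bar>of_int b\<bar> \<bar>of_int c\<bar>) powr (\<delta> - 3)" for b c :: int
  show ?thesis
  proof (rule sum_le_by_fibers[where j = 1 and g = g, OF beta_weight_nonneg _ _ F])
    fix b c :: int and N :: "int set"
    assume N: "finite N"
    define Q where "Q = max 1 (max \<bar>of_int b\<bar> \<bar>of_int c :: real\<bar>)"
    have Q: "1 \<le> Q" unfolding Q_def by simp
    have "(\<Sum>n\<in>N. beta_weight \<delta> 0 (fiber_point 1 n b c))
        \<le> (\<Sum>n\<in>N. Q powr (\<delta> - 2) / (Q\<^sup>2 + (of_int n * 1 + 0)\<^sup>2))"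
      unfolding Q_def using \<delta> by (intro sum_mono beta_weight_zero_fiber_le) auto
    also have "\<dots> = Q powr (\<delta> - 2) * (\<Sum>n\<in>N. 1 / (Q\<^sup>2 + (of_int n * 1 + 0)\<^sup>2))"
      by (simp add: sum_distrib_left)
    also have "\<dots> \<le> Q powr (\<delta> - 2) * (3 * pi * (1 + Q / \<bar>1\<bar>) / Q\<^sup>2)"
      using Q N by (intro mult_left_mono sum_inverse_square_plus_square_le) auto
    also have "\<dots> \<le> Q powr (\<delta> - 2) * (3 * pi * (2 * Q) / Q\<^sup>2)"
      using Q by (intro mult_left_mono divide_right_mono) auto
    also have "\<dots> = g b c"
      using Q by (simp add: g_def Q_def powr_diff powr_numeral field_simps power2_eq_square power3_eq_cube)
    finally show "(\<Sum>n\<in>N. beta_weight \<delta> 0 (fiber_point 1 n b c)) \<le> g b c" .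
  next
    fix B C :: "int set"
    assume "finite B" "finite C"
    then show "(\<Sum>b\<in>B. \<Sum>c\<in>C. g b c) \<le> 6 * pi * (4 * 3 powr ((3 - \<delta>) / 2) / (1 - \<delta>))\<^sup>2"
      using sum_sum_max_powr_le[of "3 - \<delta>" 1 B C] \<delta>
      unfolding g_def sum_distrib_left[symmetric] by (intro mult_left_mono) auto
  qed
qed

lemma sum_beta_weight_le:
  fixes \<delta> :: real
  assumes \<delta>: "0 \<le> \<delta>" "\<delta> < 1"
  obtains C where "0 < C"
    and "\<And>m F. finite F \<Longrightarrow> sum (beta_weight \<delta> m) F \<le> C * jbr (vlen m) powr (\<delta> - 2)"
proof
  define K where "K = (4 * 3 powr ((3 - \<delta>) / 2) / (1 - \<delta>))\<^sup>2"
  have K: "0 < K" using \<delta> by (simp add: K_def)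
  then show "0 < 28224 * pi * K" by simp
  fix m :: "int ^ 3" and F :: "(int ^ 3) set"
  assume F: "finite F"
  show "sum (beta_weight \<delta> m) F \<le> 28224 * pi * K * jbr (vlen m) powr (\<delta> - 2)"
  proof (cases "m = 0")
    case True
    then have "jbr (vlen m) powr (\<delta> - 2) = 1" using vlen_eq_0_iff[of m] by simp
    moreover have "sum (beta_weight \<delta> m) F \<le> 6 * pi * K"
      using True sum_beta_weight_zero_le[OF \<delta> F] by (simp add: K_def)
    moreover have "6 * pi * K \<le> 28224 * pi * K" using K by (intro mult_right_mono) auto
    ultimately show ?thesis by (metis mult_1_right order_trans)
  next
    case False
    then have "1 \<le> vlen m" using vlen_eq_0_or_ge_1[of m] vlen_eq_0_iff[of m] by auto
    then show ?thesis using sum_beta_weight_le_nonzero[OF _ \<delta> F] by (simp add: K_def)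
  qed
qed

lemma summable_on_infsum_le_of_sum_le:
  fixes f :: "'a \<Rightarrow> real"
  assumes nonneg: "\<And>x. 0 \<le> f x" and bound: "\<And>F. finite F \<Longrightarrow> sum f F \<le> B"
  shows "f summable_on UNIV \<and> infsum f UNIV \<le> B"
proof
  show summable: "f summable_on UNIV"
    using nonneg bound by (intro nonneg_bdd_above_summable_on bdd_aboveI2) auto
  show "infsum f UNIV \<le> B"
    using bound by (intro infsum_le_finite_sums[OF summable])
qed

lemma rpow_vlen_mult_beta_squared_le:
  fixes \<gamma> R \<delta> :: real and l m :: "int ^ 3"
  assumes \<gamma>: "0 \<le> \<gamma>" "\<gamma> \<le> 1" and R: "0 < R"
  shows "rpow (vlen l) \<delta> * (beta \<gamma> R l m)\<^sup>2
           \<le> (3072 * pi\<^sup>2)\<^sup>2 * R powr (2 * (3 + \<gamma>)) * beta_weight \<delta> m l"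
proof -
  define P where "P = jbr (vlen (l + m)) * jbr (vlen (l - m)) * jbr (vlen (l + m) - vlen (l - m))"
  have P: "0 < P" unfolding P_def by (simp add: jbr_pos)
  have "\<bar>beta \<gamma> R l m\<bar> \<le> 3072 * pi\<^sup>2 * R powr (3 + \<gamma>) / P"
    using abs_beta_le[OF \<gamma> R, of l m] unfolding P_def .
  then have "\<bar>beta \<gamma> R l m\<bar>\<^sup>2 \<le> (3072 * pi\<^sup>2 * R powr (3 + \<gamma>) / P)\<^sup>2"
    by (rule power_mono) simp
  then have "(beta \<gamma> R l m)\<^sup>2 \<le> (3072 * pi\<^sup>2 * R powr (3 + \<gamma>) / P)\<^sup>2" by simp
  also have "\<dots> = (3072 * pi\<^sup>2)\<^sup>2 * R powr (2 * (3 + \<gamma>)) / P\<^sup>2"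
  proof -
    have "2 * (3 + \<gamma>) = (3 + \<gamma>) + (3 + \<gamma>)" by simp
    then have "R powr (2 * (3 + \<gamma>)) = (R powr (3 + \<gamma>))\<^sup>2"
      by (simp only: powr_add power2_eq_square)
    then show ?thesis by (simp add: power_mult_distrib power_divide)
  qed
  finally have "rpow (vlen l) \<delta> * (beta \<gamma> R l m)\<^sup>2
      \<le> rpow (vlen l) \<delta> * ((3072 * pi\<^sup>2)\<^sup>2 * R powr (2 * (3 + \<gamma>)) / P\<^sup>2)"
    by (intro mult_left_mono rpow_nonneg)
  also have "\<dots> = (3072 * pi\<^sup>2)\<^sup>2 * R powr (2 * (3 + \<gamma>)) * beta_weight \<delta> m l"
    unfolding beta_weight_def P_def by (simp add: power_mult_distrib jbr_squared)
  finally show ?thesis .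
qed

lemma weighted_beta_square_sum_bound:
  fixes \<gamma> \<delta> :: real
  assumes \<gamma>: "0 \<le> \<gamma>" "\<gamma> \<le> 1" and \<delta>: "0 \<le> \<delta>" "\<delta> < 1"
  shows "\<exists>C>0. \<forall>R>0. \<forall>m :: int ^ 3.
           (\<lambda>l. rpow (vlen l) \<delta> * (beta \<gamma> R l m)\<^sup>2) summable_on UNIV \<and>
           (\<Sum>\<^sub>\<infinity>l. rpow (vlen l) \<delta> * (beta \<gamma> R l m)\<^sup>2)
             \<le> C * R powr (2 * (3 + \<gamma>)) * jbr (vlen m) powr (-2 + \<delta>)"
proof -
  obtain C where C: "0 < C"
    and sum_le: "\<And>m F. finite F \<Longrightarrow> sum (beta_weight \<delta> m) F \<le> C * jbr (vlen m) powr (\<delta> - 2)"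
    using sum_beta_weight_le[OF \<delta>] by blast
  define c where "c = (3072 * pi\<^sup>2)\<^sup>2"
  have "(\<lambda>l. rpow (vlen l) \<delta> * (beta \<gamma> R l m)\<^sup>2) summable_on UNIV \<and>
        (\<Sum>\<^sub>\<infinity>l. rpow (vlen l) \<delta> * (beta \<gamma> R l m)\<^sup>2)
          \<le> c * C * R powr (2 * (3 + \<gamma>)) * jbr (vlen m) powr (-2 + \<delta>)"
    if R: "0 < R" for R m
  proof (rule summable_on_infsum_le_of_sum_le)
    fix F :: "(int ^ 3) set"
    assume F: "finite F"
    have "(\<Sum>l\<in>F. rpow (vlen l) \<delta> * (beta \<gamma> R l m)\<^sup>2)
        \<le> (\<Sum>l\<in>F. c * R powr (2 * (3 + \<gamma>)) * beta_weight \<delta> m l)"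
      unfolding c_def by (intro sum_mono rpow_vlen_mult_beta_squared_le \<gamma> R)
    also have "\<dots> = c * R powr (2 * (3 + \<gamma>)) * sum (beta_weight \<delta> m) F"
      by (simp add: sum_distrib_left)
    also have "\<dots> \<le> c * R powr (2 * (3 + \<gamma>)) * (C * jbr (vlen m) powr (\<delta> - 2))"
      by (intro mult_left_mono sum_le F) (simp add: c_def)
    finally show "(\<Sum>l\<in>F. rpow (vlen l) \<delta> * (beta \<gamma> R l m)\<^sup>2)
        \<le> c * C * R powr (2 * (3 + \<gamma>)) * jbr (vlen m) powr (-2 + \<delta>)"
      by (simp add: ac_simps)
  qed (simp add: rpow_nonneg)
  moreover have "0 < c * C" using C by (simp add: c_def)
  ultimately show ?thesis by blast
qed

theorem lemma2p3:
  fixes \<gamma> :: real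
  assumes "0 \<le> \<gamma>" and "\<gamma> \<le> 1"
  shows "(\<exists>C>0. \<forall>R>0. \<forall>l m :: int ^ 3.
            \<bar>beta \<gamma> R l m\<bar> \<le> C * R powr (3 + \<gamma>)
              / (jbr (vlen (l + m)) * jbr (vlen (l - m)) * jbr (vlen (l + m) - vlen (l - m))))
       \<and> (\<forall>\<delta>::real. 0 \<le> \<delta> \<longrightarrow> \<delta> < 1 \<longrightarrow>
           (\<exists>C>0. \<forall>R>0.
              (\<forall>m :: int ^ 3.
                 (\<lambda>l. rpow (vlen l) \<delta> * (beta \<gamma> R l m)\<^sup>2) summable_on UNIV \<and>
                 (\<Sum>\<^sub>\<infinity>l. rpow (vlen l) \<delta> * (beta \<gamma> R l m)\<^sup>2)
                   \<le> C * R powr (2 * (3 + \<gamma>)) * jbr (vlen m) powr (-2 + \<delta>)) \<and>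
              (\<forall>l :: int ^ 3.
                 (\<lambda>m. rpow (vlen m) \<delta> * (beta \<gamma> R l m)\<^sup>2) summable_on UNIV \<and>
                 (\<Sum>\<^sub>\<infinity>m. rpow (vlen m) \<delta> * (beta \<gamma> R l m)\<^sup>2)
                   \<le> C * R powr (2 * (3 + \<gamma>)) * jbr (vlen l) powr (-2 + \<delta>))))"
proof -
  have "\<exists>C>0. \<forall>R>0. \<forall>l m :: int ^ 3.
          \<bar>beta \<gamma> R l m\<bar> \<le> C * R powr (3 + \<gamma>)
            / (jbr (vlen (l + m)) * jbr (vlen (l - m)) * jbr (vlen (l + m) - vlen (l - m)))"
    using abs_beta_le[OF assms] by (intro exI[of _ "3072 * pi\<^sup>2"]) auto
  moreover have swap: "(\<lambda>m. rpow (vlen m) \<delta> * (beta \<gamma> R l m)\<^sup>2) = (\<lambda>m. rpow (vlen m) \<delta> * (beta \<gamma> R m l)\<^sup>2)"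
    for \<delta> R l
    by (simp add: beta_sym[of \<gamma> R l])
  ultimately show ?thesis
    unfolding swap conj_absorb using weighted_beta_square_sum_bound[OF assms] by blast
qed

end
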